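(* Let $(\mathcal{C},P)$ be an eaco and suppose $\mathcal{C}$ has a stable initial object $0$. Then $P(0)$ is a singleton.
   Context: A doctrine is a pair $(\mathcal{C},P)$, $\mathcal{C}$ a category with finite products, $P:\mathcal{C}^{op}\to\mathbf{Pos}$ a functor, $f^*=P(f)$; primary: each $P(A)$ has binary meets preserved by each $f^*$. Elementary: primary and for every $A$ there is $\delta_A\in P(A\times A)$ such that for every $X$ the assignment $\psi\mapsto\langle\pi_1,\pi_2\rangle^*\psi\wedge\langle\pi_2,\pi_3\rangle^*\delta_A$ ($\pi_i$ the projections of $X\times A\times A$) is a left adjoint $P(X\times A)\to P(X\times A\times A)$ to $(id_X\times\Delta_A)^*$. Graph of $f:X\to A$: $\mathcal{G}(f)=(f\times id_A)^*\delta_A\in P(X\times A)$. Stable initial object: initial $0$ with $X\times0\cong0$ for all $X$. AC: for every $A$ not a stable initial object and every $\Gamma$, $\pi_\Gamma^*$ ($\pi_\Gamma:\Gamma\times A\to\Gamma$) has a left adjoint $\Sigma_{\pi_\Gamma}$ and for every $\psi\in P(\Gamma\times A)$ there is a chosen $\epsilon_\psi:\Gamma\to A$ with $\Sigma_{\pi_\Gamma}\psi=\langle id_\Gamma,\epsilon_\psi\rangle^*\psi$ (also used with the factors swapped: for $\psi\in P(B\times\Gamma)$, $\epsilon_\psi:\Gamma\to B$ with $\Sigma_{\pi_\Gamma}\psi=\langle\epsilon_\psi,id_\Gamma\rangle^*\psi$). Co-comprehension: every $P(A)$ has a bottom $\bot_A$ and for each $\alpha\in P(A)$ there is $\lceil\alpha\rceil:\{\alpha\}^o\to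 A$ with $\lceil\alpha\rceil^*\alpha=\bot$ such that every $f:Y\to A$ with $f^*\alpha=\bot_Y$ factors uniquely through $\lceil\alpha\rceil$; full if whenever $\lceil\beta\rceil$ factors through $\lceil\alpha\rceil$ then $\alpha\le\beta$. An eaco is an elementary doctrine with full co-comprehension satisfying AC such that for every $f:X\to A$ and $\alpha\in P(A)$: $f^*\langle\epsilon_{\mathcal{G}(\lceil\alpha\rceil)},id_A\rangle^*\mathcal{G}(\lceil\alpha\rceil)=\langle\epsilon_{\mathcal{G}(\lceil f^*\alpha\rceil)},id_X\rangle^*\mathcal{G}(\lceil f^*\alpha\rceil)$, where $\mathcal{G}(\lceil\alpha\rceil)\in P(\{\alpha\}^o\times A)$ and $\epsilon_{\mathcal{G}(\lceil\alpha\rceil)}:A\to\{\alpha\}^o$ is the AC witness with respect to the projection $\{\alpha\}^o\times A\to A$. *)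

theory Defs
  imports Main
begin

record ('o, 'm) category =
  cObj  :: "'o set"
  cArr  :: "'m set"
  cdom  :: "'m \<Rightarrow> 'o"
  ccod  :: "'m \<Rightarrow> 'o"
  ccomp :: "'m \<Rightarrow> 'm \<Rightarrow> 'm"   (* ccomp C g f = g o f *)
  cid   :: "'o \<Rightarrow> 'm"

definition hom :: "('o, 'm) category \<Rightarrow> 'o \<Rightarrow> 'o \<Rightarrow> 'm set" where
  "hom C X Y = {f \<in> cArr C. cdom C f = X \<and> ccod C f = Y}"

definition category :: "('o, 'm) category \<Rightarrow> bool" where
  "category C \<longleftrightarrow>
     (\<forall>f \<in> cArr C. cdom C f \<in> cObj C \<and> ccod C f \<in> cObj C) \<and>
     (\<forall>A \<in> cObj C. cid C A \<in> hom C A A) \<and>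
     (\<forall>f \<in> cArr C. \<forall>g \<in> cArr C. ccod C f = cdom C g \<longrightarrow>
        ccomp C g f \<in> hom C (cdom C f) (ccod C g)) \<and>
     (\<forall>f \<in> cArr C. ccomp C f (cid C (cdom C f)) = f \<and> ccomp C (cid C (ccod C f)) f = f) \<and>
     (\<forall>f \<in> cArr C. \<forall>g \<in> cArr C. \<forall>h \<in> cArr C.
        ccod C f = cdom C g \<longrightarrow> ccod C g = cdom C h \<longrightarrow>
        ccomp C h (ccomp C g f) = ccomp C (ccomp C h g) f)"

record ('o, 'm) products =
  pT    :: "'o"
  pProd :: "'o \<Rightarrow> 'o \<Rightarrow> 'o"
  pFst  :: "'o \<Rightarrow> 'o \<Rightarrow> 'm"
  pSnd  :: "'o \<Rightarrow> 'o \<Rightarrow> 'm"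
  pPair :: "'m \<Rightarrow> 'm \<Rightarrow> 'm"

definition finite_products :: "('o, 'm) category \<Rightarrow> ('o, 'm) products \<Rightarrow> bool" where
  "finite_products C Pr \<longleftrightarrow>
     pT Pr \<in> cObj C \<and> (\<forall>X \<in> cObj C. \<exists>!t. t \<in> hom C X (pT Pr)) \<and>
     (\<forall>A \<in> cObj C. \<forall>B \<in> cObj C.
        pProd Pr A B \<in> cObj C \<and>
        pFst Pr A B \<in> hom C (pProd Pr A B) A \<and>
        pSnd Pr A B \<in> hom C (pProd Pr A B) B \<and>
        (\<forall>X \<in> cObj C. \<forall>f \<in> hom C X A. \<forall>g \<in> hom C X B.
           pPair Pr f g \<in> hom C X (pProd Pr A B) \<and>
           ccomp C (pFst Pr A B) (pPair Pr f g) = f \<and>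
           ccomp C (pSnd Pr A B) (pPair Pr f g) = g \<and>
           (\<forall>h \<in> hom C X (pProd Pr A B).
              ccomp C (pFst Pr A B) h = f \<and> ccomp C (pSnd Pr A B) h = g \<longrightarrow> h = pPair Pr f g)))"

definition is_iso_objs :: "('o, 'm) category \<Rightarrow> 'o \<Rightarrow> 'o \<Rightarrow> bool" where
  "is_iso_objs C X Y \<longleftrightarrow> (\<exists>f \<in> hom C X Y. \<exists>g \<in> hom C Y X.
      ccomp C g f = cid C X \<and> ccomp C f g = cid C Y)"

definition is_initial :: "('o, 'm) category \<Rightarrow> 'o \<Rightarrow> bool" where
  "is_initial C Z \<longleftrightarrow> Z \<in> cObj C \<and> (\<forall>X \<in> cObj C. \<exists>!f. f \<in> hom C Z X)"

definition stable_initial :: "('o, 'm) category \<Rightarrow> ('o, 'm) products \<Rightarrow> 'o \<Rightarrow> bool" where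
  "stable_initial C Pr Z \<longleftrightarrow> is_initial C Z \<and>
     (\<forall>X \<in> cObj C. is_iso_objs C (pProd Pr X Z) Z)"

record ('o, 'm, 'p) doctrine =
  dP  :: "'o \<Rightarrow> 'p set"
  dLe :: "'o \<Rightarrow> 'p \<Rightarrow> 'p \<Rightarrow> bool"
  dPb :: "'m \<Rightarrow> 'p \<Rightarrow> 'p"

definition doctrine :: "('o, 'm) category \<Rightarrow> ('o, 'm) products \<Rightarrow> ('o, 'm, 'p) doctrine \<Rightarrow> bool" where
  "doctrine C Pr D \<longleftrightarrow> category C \<and> finite_products C Pr \<and>
     (\<forall>A \<in> cObj C.
        (\<forall>a \<in> dP D A. dLe D A a a) \<and>
        (\<forall>a \<in> dP D A. \<forall>b \<in> dP D A. dLe D A a b \<and> dLe D A b a \<longrightarrow> a = b) \<and>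
        (\<forall>a \<in> dP D A. \<forall>b \<in> dP D A. \<forall>c \<in> dP D A. dLe D A a b \<and> dLe D A b c \<longrightarrow> dLe D A a c)) \<and>
     (\<forall>f \<in> cArr C. \<forall>a \<in> dP D (ccod C f). dPb D f a \<in> dP D (cdom C f)) \<and>
     (\<forall>f \<in> cArr C. \<forall>a \<in> dP D (ccod C f). \<forall>b \<in> dP D (ccod C f).
        dLe D (ccod C f) a b \<longrightarrow> dLe D (cdom C f) (dPb D f a) (dPb D f b)) \<and>
     (\<forall>A \<in> cObj C. \<forall>a \<in> dP D A. dPb D (cid C A) a = a) \<and>
     (\<forall>f \<in> cArr C. \<forall>g \<in> cArr C. ccod C f = cdom C g \<longrightarrow>
        (\<forall>a \<in> dP D (ccod C g). dPb D (ccomp C g f) a = dPb D f (dPb D g a)))"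

definition is_meet :: "('o, 'm, 'p) doctrine \<Rightarrow> 'o \<Rightarrow> 'p \<Rightarrow> 'p \<Rightarrow> 'p \<Rightarrow> bool" where
  "is_meet D A a b c \<longleftrightarrow> c \<in> dP D A \<and> dLe D A c a \<and> dLe D A c b \<and>
     (\<forall>d \<in> dP D A. dLe D A d a \<and> dLe D A d b \<longrightarrow> dLe D A d c)"

definition meet :: "('o, 'm, 'p) doctrine \<Rightarrow> 'o \<Rightarrow> 'p \<Rightarrow> 'p \<Rightarrow> 'p" where
  "meet D A a b = (THE c. is_meet D A a b c)"

definition primary :: "('o, 'm) category \<Rightarrow> ('o, 'm) products \<Rightarrow> ('o, 'm, 'p) doctrine \<Rightarrow> bool" where
  "primary C Pr D \<longleftrightarrow> doctrine C Pr D \<and>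
     (\<forall>A \<in> cObj C. \<forall>a \<in> dP D A. \<forall>b \<in> dP D A. \<exists>c. is_meet D A a b c) \<and>
     (\<forall>f \<in> cArr C. \<forall>a \<in> dP D (ccod C f). \<forall>b \<in> dP D (ccod C f).
        dPb D f (meet D (ccod C f) a b) = meet D (cdom C f) (dPb D f a) (dPb D f b))"

text \<open>Elementary: X \<times> A \<times> A is read as X \<times> (A \<times> A).\<close>

definition elementary :: "('o, 'm) category \<Rightarrow> ('o, 'm) products \<Rightarrow> ('o, 'm, 'p) doctrine
    \<Rightarrow> ('o \<Rightarrow> 'p) \<Rightarrow> bool" where
  "elementary C Pr D \<delta> \<longleftrightarrow> primary C Pr D \<and>
     (\<forall>A \<in> cObj C. \<delta> A \<in> dP D (pProd Pr A A) \<and>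
       (\<forall>X \<in> cObj C.
          let AA = pProd Pr A A; XAA = pProd Pr X AA; XA = pProd Pr X A;
              \<pi>1 = pFst Pr X AA;
              \<pi>2 = ccomp C (pFst Pr A A) (pSnd Pr X AA);
              \<pi>3 = ccomp C (pSnd Pr A A) (pSnd Pr X AA);
              idDelta = pPair Pr (pFst Pr X A) (pPair Pr (pSnd Pr X A) (pSnd Pr X A))
          in \<forall>\<psi> \<in> dP D XA. \<forall>\<phi> \<in> dP D XAA.
               dLe D XAA (meet D XAA (dPb D (pPair Pr \<pi>1 \<pi>2) \<psi>) (dPb D (pPair Pr \<pi>2 \<pi>3) (\<delta> A))) \<phi>
               \<longleftrightarrow> dLe D XA \<psi> (dPb D idDelta \<phi>)))"

definition graph :: "('o, 'm) category \<Rightarrow> ('o, 'm) products \<Rightarrow> ('o, 'm, 'p) doctrine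
    \<Rightarrow> ('o \<Rightarrow> 'p) \<Rightarrow> 'm \<Rightarrow> 'p" where
  "graph C Pr D \<delta> f =
     dPb D (pPair Pr (ccomp C f (pFst Pr (cdom C f) (ccod C f))) (pSnd Pr (cdom C f) (ccod C f)))
       (\<delta> (ccod C f))"

text \<open>AC with chosen witnesses: epsL \<Gamma> A \<psi> : \<Gamma> \<rightarrow> A for \<psi> \<in> P(\<Gamma> \<times> A) (projection onto \<Gamma>),
  and the swapped version epsR B \<Gamma> \<psi> : \<Gamma> \<rightarrow> B for \<psi> \<in> P(B \<times> \<Gamma>).\<close>

definition AC :: "('o, 'm) category \<Rightarrow> ('o, 'm) products \<Rightarrow> ('o, 'm, 'p) doctrine
    \<Rightarrow> ('o \<Rightarrow> 'o \<Rightarrow> 'p \<Rightarrow> 'm) \<Rightarrow> ('o \<Rightarrow> 'o \<Rightarrow> 'p \<Rightarrow> 'm) \<Rightarrow> bool" where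
  "AC C Pr D epsL epsR \<longleftrightarrow>
     (\<forall>A \<in> cObj C. \<not> stable_initial C Pr A \<longrightarrow> (\<forall>\<Gamma> \<in> cObj C.
        \<exists>Sig. (\<forall>\<psi> \<in> dP D (pProd Pr \<Gamma> A). Sig \<psi> \<in> dP D \<Gamma> \<and>
                 (\<forall>\<gamma> \<in> dP D \<Gamma>. dLe D \<Gamma> (Sig \<psi>) \<gamma> \<longleftrightarrow>
                     dLe D (pProd Pr \<Gamma> A) \<psi> (dPb D (pFst Pr \<Gamma> A) \<gamma>))) \<and>
              (\<forall>\<psi> \<in> dP D (pProd Pr \<Gamma> A). epsL \<Gamma> A \<psi> \<in> hom C \<Gamma> A \<and>
                 Sig \<psi> = dPb D (pPair Pr (cid C \<Gamma>) (epsL \<Gamma> A \<psi>)) \<psi>))) \<and>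
     (\<forall>B \<in> cObj C. \<not> stable_initial C Pr B \<longrightarrow> (\<forall>\<Gamma> \<in> cObj C.
        \<exists>Sig. (\<forall>\<psi> \<in> dP D (pProd Pr B \<Gamma>). Sig \<psi> \<in> dP D \<Gamma> \<and>
                 (\<forall>\<gamma> \<in> dP D \<Gamma>. dLe D \<Gamma> (Sig \<psi>) \<gamma> \<longleftrightarrow>
                     dLe D (pProd Pr B \<Gamma>) \<psi> (dPb D (pSnd Pr B \<Gamma>) \<gamma>))) \<and>
              (\<forall>\<psi> \<in> dP D (pProd Pr B \<Gamma>). epsR B \<Gamma> \<psi> \<in> hom C \<Gamma> B \<and>
                 Sig \<psi> = dPb D (pPair Pr (epsR B \<Gamma> \<psi>) (cid C \<Gamma>)) \<psi>)))"

definition is_bot :: "('o, 'm, 'p) doctrine \<Rightarrow> 'o \<Rightarrow> 'p \<Rightarrow> bool" where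
  "is_bot D A b \<longleftrightarrow> b \<in> dP D A \<and> (\<forall>a \<in> dP D A. dLe D A b a)"

definition bot :: "('o, 'm, 'p) doctrine \<Rightarrow> 'o \<Rightarrow> 'p" where
  "bot D A = (THE b. is_bot D A b)"

text \<open>Full co-comprehension with chosen data: coObj A \<alpha> = {\<alpha>}^o, cc A \<alpha> = \<lceil>\<alpha>\<rceil>.\<close>

definition full_cocomprehension :: "('o, 'm) category \<Rightarrow> ('o, 'm, 'p) doctrine
    \<Rightarrow> ('o \<Rightarrow> 'p \<Rightarrow> 'o) \<Rightarrow> ('o \<Rightarrow> 'p \<Rightarrow> 'm) \<Rightarrow> bool" where
  "full_cocomprehension C D coObj cc \<longleftrightarrow>
     (\<forall>A \<in> cObj C. \<exists>b. is_bot D A b) \<and>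
     (\<forall>A \<in> cObj C. \<forall>\<alpha> \<in> dP D A.
        coObj A \<alpha> \<in> cObj C \<and> cc A \<alpha> \<in> hom C (coObj A \<alpha>) A \<and>
        dPb D (cc A \<alpha>) \<alpha> = bot D (coObj A \<alpha>) \<and>
        (\<forall>Y \<in> cObj C. \<forall>f \<in> hom C Y A. dPb D f \<alpha> = bot D Y \<longrightarrow>
           (\<exists>!g. g \<in> hom C Y (coObj A \<alpha>) \<and> ccomp C (cc A \<alpha>) g = f))) \<and>
     (\<forall>A \<in> cObj C. \<forall>\<alpha> \<in> dP D A. \<forall>\<beta> \<in> dP D A.
        (\<exists>g \<in> hom C (coObj A \<beta>) (coObj A \<alpha>). ccomp C (cc A \<alpha>) g = cc A \<beta>) \<longrightarrow> dLe D A \<alpha> \<beta>)"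

definition eaco :: "('o, 'm) category \<Rightarrow> ('o, 'm) products \<Rightarrow> ('o, 'm, 'p) doctrine
    \<Rightarrow> ('o \<Rightarrow> 'p) \<Rightarrow> ('o \<Rightarrow> 'o \<Rightarrow> 'p \<Rightarrow> 'm) \<Rightarrow> ('o \<Rightarrow> 'o \<Rightarrow> 'p \<Rightarrow> 'm)
    \<Rightarrow> ('o \<Rightarrow> 'p \<Rightarrow> 'o) \<Rightarrow> ('o \<Rightarrow> 'p \<Rightarrow> 'm) \<Rightarrow> bool" where
  "eaco C Pr D \<delta> epsL epsR coObj cc \<longleftrightarrow>
     elementary C Pr D \<delta> \<and> full_cocomprehension C D coObj cc \<and> AC C Pr D epsL epsR \<and>
     (\<forall>f \<in> cArr C. \<forall>\<alpha> \<in> dP D (ccod C f).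
        let A = ccod C f; X = cdom C f; \<beta> = dPb D f \<alpha>;
            GA = graph C Pr D \<delta> (cc A \<alpha>); GX = graph C Pr D \<delta> (cc X \<beta>)
        in \<not> stable_initial C Pr (coObj A \<alpha>) \<longrightarrow> \<not> stable_initial C Pr (coObj X \<beta>) \<longrightarrow>
           dPb D f (dPb D (pPair Pr (epsR (coObj A \<alpha>) A GA) (cid C A)) GA)
             = dPb D (pPair Pr (epsR (coObj X \<beta>) X GX) (cid C X)) GX)"

end

theory Submission
  imports Defs
begin

text \<open>Every object admitting a map into a stable initial object 0 is initial: it is a
  retract of its product with 0, which is initial by stability. Hence for
  \<open>\<alpha>, \<beta> \<in> P(0)\<close> the object \<open>{\<beta>}\<^sup>o\<close> is initial, so \<open>\<lceil>\<beta>\<rceil>\<close> factors through \<open>\<lceil>\<alpha>\<rceil>\<close>, and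
  fullness gives \<open>\<alpha> \<le> \<beta>\<close>. Thus any two elements of the poset P(0) coincide, and
  P(0) is nonempty because it has a bottom.\<close>

lemma hom_comp:
  assumes "category C" and "f \<in> hom C X Y" and "g \<in> hom C Y W"
  shows "ccomp C g f \<in> hom C X W"
  using assms unfolding category_def hom_def by auto

lemma is_initial_retract:
  assumes cat: "category C" and P: "is_initial C P" and X: "X \<in> cObj C"
    and s: "s \<in> hom C X P" and r: "r \<in> hom C P X" and rs: "ccomp C r s = cid C X"
  shows "is_initial C X"
  unfolding is_initial_def
proof (intro conjI ballI X)
  fix Y assume Y: "Y \<in> cObj C"
  from P Y obtain h where h: "h \<in> hom C P Y" and h_unique: "\<And>k. k \<in> hom C P Y \<Longrightarrow> k = h"
    unfolding is_initial_def by metis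
  show "\<exists>!f. f \<in> hom C X Y"
  proof (rule ex1I[of _ "ccomp C h s"])
    show "ccomp C h s \<in> hom C X Y" using cat s h by (rule hom_comp)
  next
    fix g assume g: "g \<in> hom C X Y"
    have "ccomp C g r = h" using hom_comp[OF cat r g] by (rule h_unique)
    have "g = ccomp C g (ccomp C r s)"
      using cat g rs unfolding category_def hom_def by auto
    also have "\<dots> = ccomp C (ccomp C g r) s"
      using cat g r s unfolding category_def hom_def by auto
    finally show "g = ccomp C h s" using \<open>ccomp C g r = h\<close> by simp
  qed
qed

lemma is_initial_if_hom_to_stable_initial:
  assumes cat: "category C" and fp: "finite_products C Pr" and Z: "stable_initial C Pr Z"
    and X: "X \<in> cObj C" and f: "f \<in> hom C X Z"
  shows "is_initial C X"
proof -
  have Z_initial: "is_initial C Z" and Z_obj: "Z \<in> cObj C"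
    using Z unfolding stable_initial_def is_initial_def by auto
  obtain u v where u: "u \<in> hom C (pProd Pr X Z) Z" and v: "v \<in> hom C Z (pProd Pr X Z)"
    and vu: "ccomp C v u = cid C (pProd Pr X Z)"
    using Z X unfolding stable_initial_def is_iso_objs_def by auto
  have XZ_obj: "pProd Pr X Z \<in> cObj C"
    using fp X Z_obj unfolding finite_products_def by auto
  have XZ_initial: "is_initial C (pProd Pr X Z)"
    by (rule is_initial_retract[OF cat Z_initial XZ_obj u v vu])
  have idX: "cid C X \<in> hom C X X" using cat X unfolding category_def by auto
  have "pPair Pr (cid C X) f \<in> hom C X (pProd Pr X Z)"
    and "pFst Pr X Z \<in> hom C (pProd Pr X Z) X"
    and "ccomp C (pFst Pr X Z) (pPair Pr (cid C X) f) = cid C X"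
    using fp X Z_obj idX f unfolding finite_products_def by blast+
  then show ?thesis by (intro is_initial_retract[OF cat XZ_initial X])
qed

lemma full_cocomprehension_le_if_initial:
  assumes cat: "category C" and fc: "full_cocomprehension C D coObj cc"
    and A: "A \<in> cObj C" and \<alpha>: "\<alpha> \<in> dP D A" and \<beta>: "\<beta> \<in> dP D A"
    and initial: "is_initial C (coObj A \<beta>)"
  shows "dLe D A \<alpha> \<beta>"
proof -
  have cc\<alpha>: "cc A \<alpha> \<in> hom C (coObj A \<alpha>) A" and cc\<beta>: "cc A \<beta> \<in> hom C (coObj A \<beta>) A"
    and "coObj A \<alpha> \<in> cObj C"
    using fc A \<alpha> \<beta> unfolding full_cocomprehension_def by auto
  then obtain g where g: "g \<in> hom C (coObj A \<beta>) (coObj A \<alpha>)"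
    using initial unfolding is_initial_def by metis
  have "ccomp C (cc A \<alpha>) g = cc A \<beta>"
    using initial A hom_comp[OF cat g cc\<alpha>] cc\<beta> unfolding is_initial_def by metis
  with g show ?thesis
    using fc A \<alpha> \<beta> unfolding full_cocomprehension_def by blast
qed

theorem mainTheorem10:
  fixes C :: "('o, 'm) category" and Pr :: "('o, 'm) products"
    and D :: "('o, 'm, 'p) doctrine" and \<delta> :: "'o \<Rightarrow> 'p"
    and epsL epsR :: "'o \<Rightarrow> 'o \<Rightarrow> 'p \<Rightarrow> 'm"
    and coObj :: "'o \<Rightarrow> 'p \<Rightarrow> 'o" and cc :: "'o \<Rightarrow> 'p \<Rightarrow> 'm"
    and Z :: 'o
  assumes "eaco C Pr D \<delta> epsL epsR coObj cc"
    and "stable_initial C Pr Z"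
  shows "\<exists>x. dP D Z = {x}"
proof -
  have doc: "doctrine C Pr D" and fc: "full_cocomprehension C D coObj cc"
    using assms(1) unfolding eaco_def elementary_def primary_def by auto
  have cat: "category C" and fp: "finite_products C Pr" using doc unfolding doctrine_def by auto
  have Z: "Z \<in> cObj C" using assms(2) unfolding stable_initial_def is_initial_def by auto
  have le: "dLe D Z a b" if a: "a \<in> dP D Z" and b: "b \<in> dP D Z" for a b
  proof (rule full_cocomprehension_le_if_initial[OF cat fc Z a b])
    have "coObj Z b \<in> cObj C" and "cc Z b \<in> hom C (coObj Z b) Z"
      using fc Z b unfolding full_cocomprehension_def by auto
    then show "is_initial C (coObj Z b)"
      by (rule is_initial_if_hom_to_stable_initial[OF cat fp assms(2)])
  qed
  obtain x where x: "x \<in> dP D Z"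
    using fc Z unfolding full_cocomprehension_def is_bot_def by blast
  have "a = x" if "a \<in> dP D Z" for a
    using le[OF that x] le[OF x that] doc Z that x unfolding doctrine_def by blast
  with x show ?thesis by blast
qed

end
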